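(* Let $V$ be a finite nonempty set and $f:\{0,1\}^V\to\{0,1\}^V$ be non-expansive. (1) Every subnetwork of $f$ has at most one fixed point if and only if $f$ has no positive-circular subnetwork. (2) Every subnetwork of $f$ has at least one fixed point if and only if $f$ has no negative-circular subnetwork.
   Context: $d$ is the Hamming distance on $\{0,1\}^V$; $f$ is non-expansive if $d(f(x),f(y))\le d(x,y)$ for all $x,y$. For nonempty $I\subseteq V$ and $z\in\{0,1\}^{V\setminus I}$, the subnetwork of $f$ induced by $z$ is $h:\{0,1\}^I\to\{0,1\}^I$ with $h(x|_I)=f(x)|_I$ for all $x$ whose restriction to $V\setminus I$ is $z$ ($f$ is a subnetwork of itself). For a network $g$ on $W$ and $x^{j\alpha}$ the point equal to $x$ except its $j$-component is $\alpha$, the global interaction graph $G(g)$ is the signed digraph on $W$ with a positive (resp. negative) arc from $j$ to $i$ iff $g_i(x^{j1})-g_i(x^{j0})=1$ (resp. $=-1$) for at least one $x$. A cycle is a subgraph with at most one arc between any ordered pair of vertices whose underlying unsigned digraph is a directed cycle; positive (negative) if it has an even (odd) number of negative arcs. $g$ is positive-circular (negative-circular) if $G(g)$ itself is a positive (negative) cycle through all vertices of $W$. *)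

theory Defs
  imports Main
begin

text \<open>Boolean networks. A point of {0,1}^W is encoded as a predicate x :: 'v \<Rightarrow> bool
  that is False outside W (extensional representation); True encodes 1.\<close>

definition conf :: "'v set \<Rightarrow> ('v \<Rightarrow> bool) set" where
  "conf W = {x. \<forall>v. v \<notin> W \<longrightarrow> \<not> x v}"

definition is_network :: "'v set \<Rightarrow> (('v \<Rightarrow> bool) \<Rightarrow> ('v \<Rightarrow> bool)) \<Rightarrow> bool" where
  "is_network W g \<longleftrightarrow> (\<forall>x \<in> conf W. g x \<in> conf W)"

definition hamming :: "'v set \<Rightarrow> ('v \<Rightarrow> bool) \<Rightarrow> ('v \<Rightarrow> bool) \<Rightarrow> nat" where
  "hamming V x y = card {v \<in> V. x v \<noteq> y v}"

definition non_expansive :: "'v set \<Rightarrow> (('v \<Rightarrow> bool) \<Rightarrow> ('v \<Rightarrow> bool)) \<Rightarrow> bool" where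
  "non_expansive V f \<longleftrightarrow>
     (\<forall>x \<in> conf V. \<forall>y \<in> conf V. hamming V (f x) (f y) \<le> hamming V x y)"

text \<open>Subnetwork of f (on V) induced by z \<in> {0,1}^(V-I): the network h on I with
  h(x|_I) = f(x)|_I where x|_(V-I) = z.\<close>
definition subnet ::
  "(('v \<Rightarrow> bool) \<Rightarrow> ('v \<Rightarrow> bool)) \<Rightarrow> 'v set \<Rightarrow> ('v \<Rightarrow> bool) \<Rightarrow> ('v \<Rightarrow> bool) \<Rightarrow> ('v \<Rightarrow> bool)" where
  "subnet f I z = (\<lambda>x. \<lambda>i. i \<in> I \<and> f (\<lambda>v. if v \<in> I then x v else z v) i)"

definition is_subnetwork ::
  "'v set \<Rightarrow> (('v \<Rightarrow> bool) \<Rightarrow> ('v \<Rightarrow> bool)) \<Rightarrow> 'v set \<Rightarrow> (('v \<Rightarrow> bool) \<Rightarrow> ('v \<Rightarrow> bool)) \<Rightarrow> bool" where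
  "is_subnetwork V f I h \<longleftrightarrow>
     I \<subseteq> V \<and> I \<noteq> {} \<and> (\<exists>z \<in> conf (V - I). h = subnet f I z)"

definition fixed_points :: "'v set \<Rightarrow> (('v \<Rightarrow> bool) \<Rightarrow> ('v \<Rightarrow> bool)) \<Rightarrow> ('v \<Rightarrow> bool) set" where
  "fixed_points W g = {x \<in> conf W. g x = x}"

definition pos_arc :: "'v set \<Rightarrow> (('v \<Rightarrow> bool) \<Rightarrow> ('v \<Rightarrow> bool)) \<Rightarrow> 'v \<Rightarrow> 'v \<Rightarrow> bool" where
  "pos_arc W g j i \<longleftrightarrow> j \<in> W \<and> i \<in> W \<and>
     (\<exists>x \<in> conf W. g (x(j := True)) i \<and> \<not> g (x(j := False)) i)"

definition neg_arc :: "'v set \<Rightarrow> (('v \<Rightarrow> bool) \<Rightarrow> ('v \<Rightarrow> bool)) \<Rightarrow> 'v \<Rightarrow> 'v \<Rightarrow> bool" where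
  "neg_arc W g j i \<longleftrightarrow> j \<in> W \<and> i \<in> W \<and>
     (\<exists>x \<in> conf W. \<not> g (x(j := True)) i \<and> g (x(j := False)) i)"

definition graph_is_hamiltonian_cycle :: "'v set \<Rightarrow> (('v \<Rightarrow> bool) \<Rightarrow> ('v \<Rightarrow> bool)) \<Rightarrow> bool" where
  "graph_is_hamiltonian_cycle W g \<longleftrightarrow>
     (\<forall>j i. \<not> (pos_arc W g j i \<and> neg_arc W g j i)) \<and>
     (\<exists>vs. distinct vs \<and> set vs = W \<and>
        {(j, i). pos_arc W g j i \<or> neg_arc W g j i} =
        {(vs ! k, vs ! (Suc k mod length vs)) | k. k < length vs})"

definition positive_circular :: "'v set \<Rightarrow> (('v \<Rightarrow> bool) \<Rightarrow> ('v \<Rightarrow> bool)) \<Rightarrow> bool" where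
  "positive_circular W g \<longleftrightarrow> graph_is_hamiltonian_cycle W g \<and>
     even (card {(j, i). neg_arc W g j i})"

definition negative_circular :: "'v set \<Rightarrow> (('v \<Rightarrow> bool) \<Rightarrow> ('v \<Rightarrow> bool)) \<Rightarrow> bool" where
  "negative_circular W g \<longleftrightarrow> graph_is_hamiltonian_cycle W g \<and>
     odd (card {(j, i). neg_arc W g j i})"

end

theory Submission
  imports Defs
begin

text \<open>
  A circular network is, after enumerating its vertices along the cycle, of the form
  y_{k+1} := y_k or y_{k+1} := \<not> y_k; it has two fixed points when the number of negations is
  even and none when it is odd. For the converse, take a smallest subnetwork containing a vertex i
  with two fixed points x, z that differ at i. Restricting to the set where they differ shows, by
  minimality, that x and z are antipodal, hence the only fixed points. Non-expansiveness towards
  both x and z forces every configuration u to keep its distance to x, and flipping x at a single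
  vertex j moves the image away from x at a single vertex \<sigma> j. This \<sigma> runs through all
  vertices in one cycle and the network maps u to the configuration whose value at \<sigma> j is u j,
  negated iff x j \<noteq> x (\<sigma> j): the subnetwork is positive-circular, since a cyclic sequence
  changes value an even number of times. A smallest subnetwork without fixed point, with one
  component i negated, has two fixed points differing at i; so the same argument applied to f
  with component i negated gives a positive-circular subnetwork, which is negative-circular
  once i is negated back.
\<close>

definition glue :: "'v set \<Rightarrow> ('v \<Rightarrow> bool) \<Rightarrow> ('v \<Rightarrow> bool) \<Rightarrow> ('v \<Rightarrow> bool)" where
  "glue I x z = (\<lambda>v. if v \<in> I then x v else z v)"

definition disagree :: "'v set \<Rightarrow> ('v \<Rightarrow> bool) \<Rightarrow> ('v \<Rightarrow> bool) \<Rightarrow> 'v set" where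
  "disagree W x y = {v \<in> W. x v \<noteq> y v}"

definition flip_at :: "'v set \<Rightarrow> ('v \<Rightarrow> bool) \<Rightarrow> ('v \<Rightarrow> bool)" where
  "flip_at T x = (\<lambda>v. x v \<noteq> (v \<in> T))"

lemma hamming_eq_card_disagree: "hamming W x y = card (disagree W x y)"
  by (simp add: hamming_def disagree_def)

lemma disagree_subset: "disagree W x y \<subseteq> W"
  by (auto simp: disagree_def)

lemma non_expansiveD:
  "non_expansive W g \<Longrightarrow> x \<in> conf W \<Longrightarrow> y \<in> conf W \<Longrightarrow>
    card (disagree W (g x) (g y)) \<le> card (disagree W x y)"
  by (simp add: non_expansive_def hamming_eq_card_disagree)

lemma subnet_glue: "subnet f I z = (\<lambda>x i. i \<in> I \<and> f (glue I x z) i)"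
  by (simp add: subnet_def glue_def)

lemma subnet_in_conf: "subnet f I z x \<in> conf I"
  by (auto simp: conf_def subnet_def)

lemma conf_fun_upd: "x \<in> conf W \<Longrightarrow> j \<in> W \<Longrightarrow> x(j := b) \<in> conf W"
  by (auto simp: conf_def)

lemma conf_eqI: "x \<in> conf W \<Longrightarrow> y \<in> conf W \<Longrightarrow> (\<And>v. v \<in> W \<Longrightarrow> x v = y v) \<Longrightarrow> x = y"
  by (auto simp: conf_def fun_eq_iff)

lemma conf_antipodal_unique:
  "y \<in> conf W \<Longrightarrow> y' \<in> conf W \<Longrightarrow> \<forall>v\<in>W. x v \<noteq> y v \<Longrightarrow> \<forall>v\<in>W. x v \<noteq> y' v \<Longrightarrow> y = y'"
  by (rule conf_eqI) auto

lemma finite_conf: "finite W \<Longrightarrow> finite (conf W)"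
proof -
  assume "finite W"
  moreover have "conf W \<subseteq> (\<lambda>S v. v \<in> S) ` Pow W"
  proof
    fix x assume "x \<in> conf W"
    then have "x = (\<lambda>v. v \<in> {v \<in> W. x v})" by (auto simp: conf_def fun_eq_iff)
    then show "x \<in> (\<lambda>S v. v \<in> S) ` Pow W" by blast
  qed
  ultimately show ?thesis by (meson finite_Pow_iff finite_imageI finite_subset)
qed

lemma is_network_subnet: "is_network I (subnet f I z)"
  by (simp add: is_network_def subnet_in_conf)

lemma is_subnetwork_finite: "finite V \<Longrightarrow> is_subnetwork V f I h \<Longrightarrow> finite I"
  by (auto simp: is_subnetwork_def intro: finite_subset)

lemma is_subnetwork_is_network: "is_subnetwork V f I h \<Longrightarrow> is_network I h"
  by (auto simp: is_subnetwork_def is_network_subnet)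

lemma non_expansive_subnetwork:
  assumes "finite V" and "non_expansive V f" and "is_subnetwork V f I h"
  shows "non_expansive I h"
  unfolding non_expansive_def
proof (intro ballI)
  obtain z where IV: "I \<subseteq> V" and z: "z \<in> conf (V - I)" and h: "h = subnet f I z"
    using assms(3) by (auto simp: is_subnetwork_def)
  fix x y assume x: "x \<in> conf I" and y: "y \<in> conf I"
  have x': "glue I x z \<in> conf V" and y': "glue I y z \<in> conf V"
    using x y z IV by (auto simp: conf_def glue_def)
  have "disagree I (h x) (h y) \<subseteq> disagree V (f (glue I x z)) (f (glue I y z))"
    using IV by (auto simp: h subnet_glue disagree_def)
  then have "hamming I (h x) (h y) \<le> hamming V (f (glue I x z)) (f (glue I y z))"
    unfolding hamming_eq_card_disagree
    by (intro card_mono) (use assms(1) in \<open>auto simp: disagree_def\<close>)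
  also have "\<dots> \<le> hamming V (glue I x z) (glue I y z)"
    using assms(2) x' y' by (auto simp: non_expansive_def)
  also have "\<dots> = hamming I x y"
    using IV by (auto simp: hamming_def glue_def intro!: arg_cong[where f = card])
  finally show "hamming I (h x) (h y) \<le> hamming I x y" .
qed

lemma is_subnetwork_subnet:
  assumes "is_subnetwork V f I h" and "J \<subseteq> I" and "J \<noteq> {}" and "w \<in> conf (I - J)"
  shows "is_subnetwork V f J (subnet h J w)"
proof -
  obtain z where IV: "I \<subseteq> V" and z: "z \<in> conf (V - I)" and h: "h = subnet f I z"
    using assms(1) by (auto simp: is_subnetwork_def)
  have "glue I w z \<in> conf (V - J)"
    using z assms(2,4) IV by (auto simp: conf_def glue_def)
  moreover have glue_glue: "glue I (glue J x w) z = glue J x (glue I w z)" for x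
    using assms(2) by (auto simp: glue_def fun_eq_iff)
  have "subnet h J w = subnet f J (glue I w z)"
    using assms(2) unfolding h subnet_glue glue_glue by auto
  ultimately show ?thesis
    using assms(2,3) IV by (auto simp: is_subnetwork_def)
qed

lemma subnet_restrict:
  assumes "\<forall>v. v \<notin> E \<longrightarrow> x v = w v"
  shows "subnet g E (\<lambda>v. v \<notin> E \<and> w v) (\<lambda>v. v \<in> E \<and> x v) = (\<lambda>v. v \<in> E \<and> g x v)"
proof -
  have "(\<lambda>v. if v \<in> E then v \<in> E \<and> x v else v \<notin> E \<and> w v) = x"
    using assms by (auto simp: fun_eq_iff)
  then show ?thesis by (simp add: subnet_def)
qed

lemma restrict_fixed_point:
  assumes "x \<in> fixed_points I g" and "\<forall>v. v \<notin> E \<longrightarrow> x v = w v"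
  shows "(\<lambda>v. v \<in> E \<and> x v) \<in> fixed_points E (subnet g E (\<lambda>v. v \<notin> E \<and> w v))"
  using assms subnet_restrict[OF assms(2)] by (simp add: fixed_points_def conf_def)

lemma flip_at_flip_at [simp]: "flip_at T (flip_at T x) = x"
  by (auto simp: flip_at_def fun_eq_iff)

lemma fixed_points_flip_at:
  "u \<in> fixed_points W (flip_at T \<circ> g) \<longleftrightarrow> u \<in> conf W \<and> g u = flip_at T u"
  by (auto simp: fixed_points_def) (metis flip_at_flip_at)

lemma non_expansive_flip_at: "non_expansive V f \<Longrightarrow> non_expansive V (flip_at T \<circ> f)"
proof -
  have "hamming V (flip_at T x) (flip_at T y) = hamming V x y" for x y
    by (auto simp: hamming_def flip_at_def intro!: arg_cong[where f = card])
  then show "non_expansive V f \<Longrightarrow> non_expansive V (flip_at T \<circ> f)"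
    by (simp add: non_expansive_def)
qed

lemma is_subnetwork_flip_at:
  assumes "is_subnetwork V f I h" and "T \<subseteq> I"
  shows "is_subnetwork V (flip_at T \<circ> f) I (flip_at T \<circ> h)"
proof -
  obtain z where "I \<subseteq> V" "I \<noteq> {}" "z \<in> conf (V - I)" and h: "h = subnet f I z"
    using assms(1) by (auto simp: is_subnetwork_def)
  moreover have "flip_at T \<circ> h = subnet (flip_at T \<circ> f) I z"
    using assms(2) by (auto simp: h subnet_def flip_at_def fun_eq_iff)
  ultimately show ?thesis unfolding is_subnetwork_def by blast
qed

lemma finite_fixed_points: "finite W \<Longrightarrow> finite (fixed_points W h)"
  by (rule finite_subset[OF _ finite_conf]) (auto simp: fixed_points_def)

lemma flip_at_comp_flip_at [simp]: "flip_at T \<circ> (flip_at T \<circ> f) = f"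
  by (simp add: fun_eq_iff)

lemma eq_flip_at_if_agree_elsewhere:
  assumes "x \<in> conf W" and "y \<in> conf W" and "i \<in> W"
    and agree: "\<forall>j\<in>W - {i}. y j = x j" and "y \<noteq> x"
  shows "y = flip_at {i} x"
proof -
  have "y i \<noteq> x i" using conf_eqI[OF assms(2,1)] agree \<open>y \<noteq> x\<close> by blast
  moreover have "flip_at {i} x \<in> conf W"
    using assms(1,3) by (auto simp: flip_at_def conf_def)
  ultimately show ?thesis
    using agree by (intro conf_eqI[OF assms(2)]) (auto simp: flip_at_def)
qed

lemma ex_card_minimal:
  "\<exists>A x. P A x \<Longrightarrow> \<exists>A x. P A x \<and> (\<forall>B y. P B y \<longrightarrow> \<not> card B < card A)"
  using exists_least_iff[of "\<lambda>n. \<exists>A x. P A x \<and> card A = n"] by metis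

section \<open>Networks in cyclic form\<close>

lemma Suc_mod_inj: "k < n \<Longrightarrow> l < n \<Longrightarrow> Suc k mod n = Suc l mod n \<Longrightarrow> k = l"
  by (metis Suc_lessI mod_less mod_self nat.distinct(1) nat.inject)

lemma ex_Suc_mod_eq:
  assumes "m < n"
  shows "\<exists>k<n. Suc k mod n = m"
proof (cases m)
  case 0
  then show ?thesis using assms by (intro exI[of _ "n - 1"]) auto
next
  case (Suc l)
  then show ?thesis using assms by (intro exI[of _ l]) auto
qed

lemma nth_Suc_mod_in_set: "k < length xs \<Longrightarrow> xs ! (Suc k mod length xs) \<in> set xs"
  by (meson le_less_trans mod_less_divisor nth_mem zero_le)

lemma nth_Suc_mod_eq_iff:
  assumes "distinct xs" and "k < length xs" and "l < length xs"
  shows "xs ! (Suc k mod length xs) = xs ! (Suc l mod length xs) \<longleftrightarrow> k = l"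
proof -
  have "Suc m mod length xs < length xs" if "m < length xs" for m
    using that by (meson le_less_trans mod_less_divisor zero_le)
  then show ?thesis
    using nth_eq_iff_index_eq[OF assms(1)] Suc_mod_inj assms(2,3) by metis
qed

lemma even_card_less_Suc:
  "even (card {m. m < Suc k \<and> P m}) \<longleftrightarrow> (even (card {m. m < k \<and> P m}) \<longleftrightarrow> \<not> P k)"
proof -
  have "{m. m < Suc k \<and> P m} = (if P k then insert k else id) {m. m < k \<and> P m}"
    by (auto simp: less_Suc_eq)
  then show ?thesis by simp
qed

lemma even_card_toggle:
  assumes "k0 < (n::nat)"
  shows "even (card {k. k < n \<and> (P k \<noteq> (k = k0))}) \<longleftrightarrow> odd (card {k. k < n \<and> P k})"
proof -
  let ?A = "{k. k < n \<and> P k}"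
  have fin: "finite ?A" by (rule finite_subset[of _ "{..<n}"]) auto
  show ?thesis
  proof (cases "P k0")
    case True
    then have "{k. k < n \<and> (P k \<noteq> (k = k0))} = ?A - {k0}" and "k0 \<in> ?A"
      using assms by auto
    moreover have "card ?A = Suc (card (?A - {k0}))"
      using card_Suc_Diff1[OF fin \<open>k0 \<in> ?A\<close>] by simp
    ultimately show ?thesis by (metis even_Suc)
  next
    case False
    then have "{k. k < n \<and> (P k \<noteq> (k = k0))} = insert k0 ?A" and "k0 \<notin> ?A"
      using assms by auto
    then show ?thesis using fin by simp
  qed
qed

lemma even_card_changes:
  fixes b :: "nat \<Rightarrow> bool"
  shows "even (card {k. k < m \<and> b k \<noteq> b (Suc k)}) \<longleftrightarrow> b m = b 0"
proof (induction m)
  case (Suc m)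
  then show ?case
    using even_card_less_Suc[of m "\<lambda>k. b k \<noteq> b (Suc k)"] by argo
qed simp

lemma even_card_cyclic_changes:
  fixes b :: "nat \<Rightarrow> bool"
  shows "even (card {k. k < n \<and> b k \<noteq> b (Suc k mod n)})"
proof -
  have "{k. k < n \<and> b k \<noteq> b (Suc k mod n)} = {k. k < n \<and> b (k mod n) \<noteq> b (Suc k mod n)}"
    by auto
  then show ?thesis
    using even_card_changes[of n "\<lambda>k. b (k mod n)"] by simp
qed

text \<open>The list vs enumerates W along a cycle (positions are taken modulo length vs), and s k is
  the sign of the only arc into vs ! (k + 1), which comes from vs ! k.\<close>
definition cyclic_form ::
  "'v set \<Rightarrow> (('v \<Rightarrow> bool) \<Rightarrow> ('v \<Rightarrow> bool)) \<Rightarrow> 'v list \<Rightarrow> (nat \<Rightarrow> bool) \<Rightarrow> bool" where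
  "cyclic_form W g vs s \<longleftrightarrow> distinct vs \<and> set vs = W \<and>
     (\<forall>y\<in>conf W. \<forall>k<length vs. g y (vs ! (Suc k mod length vs)) = (y (vs ! k) = s k))"

lemma cyclic_formD:
  "cyclic_form W g vs s \<Longrightarrow> y \<in> conf W \<Longrightarrow> k < length vs \<Longrightarrow>
    g y (vs ! (Suc k mod length vs)) = (y (vs ! k) = s k)"
  by (simp add: cyclic_form_def)

lemma cyclic_form_arc_source:
  assumes cf: "cyclic_form W g vs s" and x: "x \<in> conf W" and j: "j \<in> W" and "i \<in> W"
    and changes: "g (x(j := True)) i \<noteq> g (x(j := False)) i"
  shows "\<exists>k<length vs. j = vs ! k \<and> i = vs ! (Suc k mod length vs) \<and> g (x(j := True)) i = s k"
proof -
  have "set vs = W" using cf by (simp add: cyclic_form_def)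
  then obtain k where k: "k < length vs" "i = vs ! (Suc k mod length vs)"
    using \<open>i \<in> W\<close> ex_Suc_mod_eq by (metis in_set_conv_nth)
  note image_at_i = cyclic_formD[OF cf conf_fun_upd[OF x j] k(1)]
  then have "j = vs ! k"
    using changes k(2) by (cases "j = vs ! k") auto
  then show ?thesis using image_at_i k by auto
qed

lemma cyclic_form_arc_witness:
  assumes cf: "cyclic_form W g vs s" and "k < length vs"
  shows "g ((\<lambda>_. False)(vs ! k := b)) (vs ! (Suc k mod length vs)) = (b = s k)"
proof -
  have "vs ! k \<in> W" using cf assms(2) by (auto simp: cyclic_form_def)
  then have "(\<lambda>_. False)(vs ! k := b) \<in> conf W" by (simp add: conf_def)
  then show ?thesis using cyclic_formD[OF cf _ assms(2)] by simp
qed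

lemma cyclic_form_arcs:
  assumes cf: "cyclic_form W g vs s"
  shows "pos_arc W g j i \<longleftrightarrow> (\<exists>k<length vs. j = vs ! k \<and> i = vs ! (Suc k mod length vs) \<and> s k)"
    and "neg_arc W g j i \<longleftrightarrow> (\<exists>k<length vs. j = vs ! k \<and> i = vs ! (Suc k mod length vs) \<and> \<not> s k)"
proof -
  let ?n = "length vs"
  have in_W: "vs ! k \<in> W" "vs ! (Suc k mod ?n) \<in> W" if "k < ?n" for k
    using that cf nth_Suc_mod_in_set by (auto simp: cyclic_form_def)
  show "pos_arc W g j i \<longleftrightarrow> (\<exists>k<?n. j = vs ! k \<and> i = vs ! (Suc k mod ?n) \<and> s k)"
  proof
    assume "pos_arc W g j i"
    then obtain x where "x \<in> conf W" "j \<in> W" "i \<in> W" "g (x(j := True)) i" "\<not> g (x(j := False)) i"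
      by (auto simp: pos_arc_def)
    then show "\<exists>k<?n. j = vs ! k \<and> i = vs ! (Suc k mod ?n) \<and> s k"
      using cyclic_form_arc_source[OF cf] by fastforce
  next
    assume "\<exists>k<?n. j = vs ! k \<and> i = vs ! (Suc k mod ?n) \<and> s k"
    then obtain k where "k < ?n" "j = vs ! k" "i = vs ! (Suc k mod ?n)" "s k" by blast
    then show "pos_arc W g j i"
      unfolding pos_arc_def using in_W[of k] cyclic_form_arc_witness[OF cf \<open>k < ?n\<close>]
      by (intro conjI bexI[of _ "\<lambda>_. False"]) (simp_all add: conf_def)
  qed
  show "neg_arc W g j i \<longleftrightarrow> (\<exists>k<?n. j = vs ! k \<and> i = vs ! (Suc k mod ?n) \<and> \<not> s k)"
  proof
    assume "neg_arc W g j i"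
    then obtain x where "x \<in> conf W" "j \<in> W" "i \<in> W" "\<not> g (x(j := True)) i" "g (x(j := False)) i"
      by (auto simp: neg_arc_def)
    then show "\<exists>k<?n. j = vs ! k \<and> i = vs ! (Suc k mod ?n) \<and> \<not> s k"
      using cyclic_form_arc_source[OF cf] by fastforce
  next
    assume "\<exists>k<?n. j = vs ! k \<and> i = vs ! (Suc k mod ?n) \<and> \<not> s k"
    then obtain k where "k < ?n" "j = vs ! k" "i = vs ! (Suc k mod ?n)" "\<not> s k" by blast
    then show "neg_arc W g j i"
      unfolding neg_arc_def using in_W[of k] cyclic_form_arc_witness[OF cf \<open>k < ?n\<close>]
      by (intro conjI bexI[of _ "\<lambda>_. False"]) (simp_all add: conf_def)
  qed
qed

lemma cyclic_form_hamiltonian: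
  assumes cf: "cyclic_form W g vs s"
  shows "graph_is_hamiltonian_cycle W g"
    and "card {(j, i). neg_arc W g j i} = card {k. k < length vs \<and> \<not> s k}"
proof -
  let ?n = "length vs" and ?e = "\<lambda>k. (vs ! k, vs ! (Suc k mod length vs))"
  have dvs: "distinct vs" using cf by (simp add: cyclic_form_def)
  have not_both: "\<not> (pos_arc W g j i \<and> neg_arc W g j i)" for j i
    using nth_eq_iff_index_eq[OF dvs] by (auto simp: cyclic_form_arcs[OF cf])
  have "{(j, i). pos_arc W g j i \<or> neg_arc W g j i} = {?e k | k. k < ?n}"
    by (auto simp: cyclic_form_arcs[OF cf])
  then show "graph_is_hamiltonian_cycle W g"
    using cf not_both unfolding graph_is_hamiltonian_cycle_def cyclic_form_def by blast
  have "{(j, i). neg_arc W g j i} = ?e ` {k. k < ?n \<and> \<not> s k}"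
    by (auto simp: cyclic_form_arcs[OF cf])
  moreover have "inj_on ?e {k. k < ?n \<and> \<not> s k}"
    using nth_eq_iff_index_eq[OF dvs] by (auto simp: inj_on_def)
  ultimately show "card {(j, i). neg_arc W g j i} = card {k. k < ?n \<and> \<not> s k}"
    by (simp add: card_image)
qed

lemma value_eq_if_no_arcs_from_outside:
  assumes "finite W"
    and no_arc: "\<forall>j\<in>W - S. \<not> pos_arc W g j i \<and> \<not> neg_arc W g j i" and "i \<in> W"
    and "x \<in> conf W" and "y \<in> conf W" and "\<forall>v\<in>S. x v = y v"
  shows "g x i = g y i"
  using assms(4-6)
proof (induction "card (disagree W x y)" arbitrary: x)
  case 0
  then have "x = y" using assms(1) by (auto simp: disagree_def intro: conf_eqI)
  then show ?case by simp
next
  case (Suc n)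
  then obtain j where j: "j \<in> W" "x j \<noteq> y j"
    by (metis (mono_tags, lifting) disagree_def Collect_empty_eq card.empty nat.distinct(1))
  then have "j \<in> W - S" using Suc.prems(3) by auto
  then have "g (x(j := b)) i = g (x(j := y j)) i" for b
    using no_arc Suc.prems(1) j(1) \<open>i \<in> W\<close>
    by (cases b; cases "y j") (auto simp: pos_arc_def neg_arc_def)
  then have "g x i = g (x(j := y j)) i"
    by (metis fun_upd_triv)
  also have "\<dots> = g y i"
  proof (rule Suc.hyps(1))
    have "disagree W (x(j := y j)) y = disagree W x y - {j}"
      by (auto simp: disagree_def)
    then show "n = card (disagree W (x(j := y j)) y)"
      using Suc.hyps(2) j assms(1) by (simp add: disagree_def)
  qed (use Suc.prems j in \<open>auto intro: conf_fun_upd\<close>)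
  finally show ?case .
qed

lemma value_of_unique_in_arc:
  assumes "finite W" and "i \<in> W"
    and unique: "\<forall>j'\<in>W. pos_arc W g j' i \<or> neg_arc W g j' i \<longrightarrow> j' = j"
    and arc: "pos_arc W g j i \<or> neg_arc W g j i" and "y \<in> conf W"
  shows "g y i = (y j = pos_arc W g j i)"
proof -
  have "j \<in> W" using arc by (auto simp: pos_arc_def neg_arc_def)
  have no_other_arc: "\<forall>j'\<in>W - {j}. \<not> pos_arc W g j' i \<and> \<not> neg_arc W g j' i"
    using unique by blast
  have local: "g u i = g u' i" if "u \<in> conf W" "u' \<in> conf W" "u j = u' j" for u u'
    using value_eq_if_no_arcs_from_outside[OF assms(1) no_other_arc assms(2) that(1,2)] that(3)
    by simp
  have via: "g y i = g (x(j := y j)) i" if "x \<in> conf W" for x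
    using local[OF \<open>y \<in> conf W\<close> conf_fun_upd[OF that \<open>j \<in> W\<close>]] by simp
  show ?thesis
  proof (cases "pos_arc W g j i")
    case True
    then obtain x where "x \<in> conf W" "g (x(j := True)) i" "\<not> g (x(j := False)) i"
      by (auto simp: pos_arc_def)
    then show ?thesis using via True by (cases "y j") auto
  next
    case False
    then have "neg_arc W g j i" using arc by blast
    then obtain x where "x \<in> conf W" "\<not> g (x(j := True)) i" "g (x(j := False)) i"
      by (auto simp: neg_arc_def)
    then show ?thesis using via False by (cases "y j") auto
  qed
qed

lemma hamiltonian_imp_cyclic_form:
  assumes "finite W" and "graph_is_hamiltonian_cycle W g"
  obtains vs s where "cyclic_form W g vs s"
proof -
  obtain vs where dvs: "distinct vs" and svs: "set vs = W"
    and arcs: "{(j, i). pos_arc W g j i \<or> neg_arc W g j i} =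
               {(vs ! k, vs ! (Suc k mod length vs)) | k. k < length vs}"
    using assms(2) unfolding graph_is_hamiltonian_cycle_def by blast
  let ?n = "length vs"
  have arc_iff: "pos_arc W g j i \<or> neg_arc W g j i \<longleftrightarrow>
      (\<exists>k<?n. j = vs ! k \<and> i = vs ! (Suc k mod ?n))" for j i
    using arcs by (auto simp: set_eq_iff)
  have "g y (vs ! (Suc k mod ?n)) = (y (vs ! k) = pos_arc W g (vs ! k) (vs ! (Suc k mod ?n)))"
    if "y \<in> conf W" "k < ?n" for y k
  proof (rule value_of_unique_in_arc[OF assms(1) _ _ _ that(1)])
    show "vs ! (Suc k mod ?n) \<in> W"
      using that(2) svs nth_Suc_mod_in_set by blast
    show "\<forall>j'\<in>W. pos_arc W g j' (vs ! (Suc k mod ?n)) \<or> neg_arc W g j' (vs ! (Suc k mod ?n))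
        \<longrightarrow> j' = vs ! k"
    proof (intro ballI impI)
      fix j' assume "pos_arc W g j' (vs ! (Suc k mod ?n)) \<or> neg_arc W g j' (vs ! (Suc k mod ?n))"
      then obtain l where l: "l < ?n" "j' = vs ! l" "vs ! (Suc k mod ?n) = vs ! (Suc l mod ?n)"
        by (auto simp: arc_iff)
      then show "j' = vs ! k" using nth_Suc_mod_eq_iff[OF dvs \<open>k < ?n\<close> l(1)] by simp
    qed
    show "pos_arc W g (vs ! k) (vs ! (Suc k mod ?n)) \<or> neg_arc W g (vs ! k) (vs ! (Suc k mod ?n))"
      using that(2) by (auto simp: arc_iff)
  qed
  then have "cyclic_form W g vs (\<lambda>k. pos_arc W g (vs ! k) (vs ! (Suc k mod ?n)))"
    using dvs svs by (simp add: cyclic_form_def)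
  then show ?thesis by (rule that)
qed

lemma hamiltonian_cycle_iff_cyclic_form:
  assumes "finite W"
  shows "graph_is_hamiltonian_cycle W g \<and> P (card {(j, i). neg_arc W g j i}) \<longleftrightarrow>
    (\<exists>vs s. cyclic_form W g vs s \<and> P (card {k. k < length vs \<and> \<not> s k}))"
proof
  assume "graph_is_hamiltonian_cycle W g \<and> P (card {(j, i). neg_arc W g j i})"
  then have ham: "graph_is_hamiltonian_cycle W g" and P: "P (card {(j, i). neg_arc W g j i})"
    by simp_all
  obtain vs s where cf: "cyclic_form W g vs s"
    by (rule hamiltonian_imp_cyclic_form[OF assms ham])
  then show "\<exists>vs s. cyclic_form W g vs s \<and> P (card {k. k < length vs \<and> \<not> s k})"
    using P cyclic_form_hamiltonian(2)[OF cf] by auto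
next
  assume "\<exists>vs s. cyclic_form W g vs s \<and> P (card {k. k < length vs \<and> \<not> s k})"
  then obtain vs s where cf: "cyclic_form W g vs s" and P: "P (card {k. k < length vs \<and> \<not> s k})"
    by blast
  show "graph_is_hamiltonian_cycle W g \<and> P (card {(j, i). neg_arc W g j i})"
    using cyclic_form_hamiltonian[OF cf] P by simp
qed

lemma positive_circular_iff_cyclic_form:
  "finite W \<Longrightarrow> positive_circular W g \<longleftrightarrow>
    (\<exists>vs s. cyclic_form W g vs s \<and> even (card {k. k < length vs \<and> \<not> s k}))"
  unfolding positive_circular_def by (rule hamiltonian_cycle_iff_cyclic_form)

lemma negative_circular_iff_cyclic_form:
  "finite W \<Longrightarrow> negative_circular W g \<longleftrightarrow>
    (\<exists>vs s. cyclic_form W g vs s \<and> odd (card {k. k < length vs \<and> \<not> s k}))"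
  unfolding negative_circular_def by (rule hamiltonian_cycle_iff_cyclic_form)

lemma cyclic_form_fixed_point_nth:
  assumes cf: "cyclic_form W g vs s" and y: "y \<in> fixed_points W g" and "k < length vs"
  shows "y (vs ! k) = (y (vs ! 0) = even (card {m. m < k \<and> \<not> s m}))"
  using \<open>k < length vs\<close>
proof (induction k)
  case (Suc k)
  have y_conf: "y \<in> conf W" and fixed: "g y = y" using y by (simp_all add: fixed_points_def)
  have "y (vs ! Suc k) = g y (vs ! (Suc k mod length vs))"
    using fixed Suc.prems by simp
  also have "\<dots> = (y (vs ! k) = s k)"
    using cyclic_formD[OF cf y_conf, of k] Suc.prems by simp
  finally show ?case
    using Suc.IH Suc.prems even_card_less_Suc[of k "\<lambda>m. \<not> s m"] by simp argo
qed simp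

lemma cyclic_form_odd_imp_no_fixed_point:
  assumes cf: "cyclic_form W g vs s" and odd: "odd (card {k. k < length vs \<and> \<not> s k})"
  shows "fixed_points W g = {}"
proof (rule ccontr)
  let ?n = "length vs"
  assume "fixed_points W g \<noteq> {}"
  then obtain y where y: "y \<in> fixed_points W g" by blast
  have "?n \<noteq> 0" using odd by (intro notI) simp
  then have last: "?n - 1 < ?n" "Suc (?n - 1) = ?n" by simp_all
  have y_conf: "y \<in> conf W" and fixed: "g y = y" using y by (simp_all add: fixed_points_def)
  have "y (vs ! 0) = g y (vs ! (Suc (?n - 1) mod ?n))"
    using fixed last by simp
  also have "\<dots> = (y (vs ! (?n - 1)) = s (?n - 1))"
    using cyclic_formD[OF cf y_conf last(1)] .
  also have "\<dots> = (y (vs ! 0) = even (card {k. k < ?n \<and> \<not> s k}))"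
    using cyclic_form_fixed_point_nth[OF cf y last(1)] even_card_less_Suc[of "?n - 1" "\<lambda>k. \<not> s k"]
    unfolding last(2) by argo
  finally show False using odd by simp
qed

lemma cyclic_form_fixed_pointI:
  assumes net: "is_network W g" and cf: "cyclic_form W g vs s" and y: "y \<in> conf W"
    and recurrence: "\<And>k. k < length vs \<Longrightarrow> y (vs ! (Suc k mod length vs)) = (y (vs ! k) = s k)"
  shows "y \<in> fixed_points W g"
proof -
  have "g y v = y v" for v
  proof (cases "v \<in> W")
    case False
    then show ?thesis using net y by (auto simp: is_network_def conf_def)
  next
    case True
    then obtain m where m: "m < length vs" "v = vs ! m"
      using cf by (auto simp: cyclic_form_def in_set_conv_nth)
    then obtain k where k: "k < length vs" "Suc k mod length vs = m" using ex_Suc_mod_eq by blast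
    then show ?thesis using cyclic_formD[OF cf y k(1)] recurrence[OF k(1)] m(2) by simp
  qed
  then have "g y = y" by (rule ext)
  then show ?thesis using y by (simp add: fixed_points_def)
qed

lemma cyclic_form_even_imp_two_fixed_points:
  assumes net: "is_network W g" and cf: "cyclic_form W g vs s" and "vs \<noteq> []"
    and even: "even (card {k. k < length vs \<and> \<not> s k})"
  obtains a c where "a \<in> fixed_points W g" and "c \<in> fixed_points W g" and "a \<noteq> c"
proof -
  let ?n = "length vs"
  have dvs: "distinct vs" and svs: "set vs = W"
    using cf by (auto simp: cyclic_form_def)
  define t where "t b k \<longleftrightarrow> (b \<longleftrightarrow> even (card {m. m < k \<and> \<not> s m}))" for b k
  have t_Suc_mod: "t b (Suc k mod ?n) = (t b k = s k)" if "k < ?n" for b k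
  proof -
    have "t b (Suc k) = (t b k = s k)"
      unfolding t_def even_card_less_Suc by argo
    moreover have "t b (Suc k mod ?n) = t b (Suc k)"
    proof (cases "Suc k < ?n")
      case False
      then have "Suc k = ?n" using that by simp
      then show ?thesis using even by (simp add: t_def)
    qed simp
    ultimately show ?thesis by simp
  qed
  define y where "y b = (\<lambda>v. \<exists>k<?n. vs ! k = v \<and> t b k)" for b
  have y_nth: "y b (vs ! k) = t b k" if "k < ?n" for b k
    using that nth_eq_iff_index_eq[OF dvs] by (auto simp: y_def)
  have "y b \<in> fixed_points W g" for b
  proof (rule cyclic_form_fixed_pointI[OF net cf])
    show "y b \<in> conf W" using svs by (auto simp: y_def conf_def)
    show "y b (vs ! (Suc k mod ?n)) = (y b (vs ! k) = s k)" if "k < ?n" for k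
      using y_nth[OF that] y_nth[OF mod_less_divisor] t_Suc_mod[OF that] \<open>vs \<noteq> []\<close> by simp
  qed
  moreover have "y True (vs ! 0) \<noteq> y False (vs ! 0)"
    using y_nth[of 0] \<open>vs \<noteq> []\<close> by (simp add: t_def)
  then have "y True \<noteq> y False" by metis
  ultimately show ?thesis using that by blast
qed

lemma cyclic_form_flip_at:
  assumes cf: "cyclic_form W g vs s" and "i \<in> W"
  obtains s' where "cyclic_form W (flip_at {i} \<circ> g) vs s'"
    and "even (card {k. k < length vs \<and> \<not> s' k}) \<longleftrightarrow> odd (card {k. k < length vs \<and> \<not> s k})"
proof -
  let ?n = "length vs"
  have dvs: "distinct vs" and svs: "set vs = W"
    using cf by (auto simp: cyclic_form_def)
  obtain m where m: "m < ?n" "vs ! m = i" using \<open>i \<in> W\<close> svs by (auto simp: in_set_conv_nth)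
  obtain k0 where k0: "k0 < ?n" "Suc k0 mod ?n = m" using ex_Suc_mod_eq[OF m(1)] by blast
  have target_i: "vs ! (Suc k mod ?n) = i \<longleftrightarrow> k = k0" if "k < ?n" for k
    using nth_Suc_mod_eq_iff[OF dvs that k0(1)] k0(2) m(2) by simp
  define s' where "s' k \<longleftrightarrow> (s k \<noteq> (k = k0))" for k
  have "cyclic_form W (flip_at {i} \<circ> g) vs s'"
    using cf target_i by (auto simp: cyclic_form_def flip_at_def s'_def)
  moreover have "{k. k < ?n \<and> \<not> s' k} = {k. k < ?n \<and> ((\<not> s k) \<noteq> (k = k0))}"
    by (auto simp: s'_def)
  then have "even (card {k. k < ?n \<and> \<not> s' k}) \<longleftrightarrow> odd (card {k. k < ?n \<and> \<not> s k})"
    using even_card_toggle[OF k0(1), of "\<lambda>k. \<not> s k"] by argo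
  ultimately show ?thesis by (rule that)
qed

section \<open>Two antipodal fixed points\<close>

lemma first_repetition:
  fixes a :: "nat \<Rightarrow> 'a"
  assumes "finite D" and a_in: "\<And>k. a k \<in> D"
  obtains p q where "p < q" and "a p = a q" and "inj_on a {p..<q}"
proof -
  have "\<not> inj_on a {..card D}"
  proof
    assume "inj_on a {..card D}"
    then have "card (a ` {..card D}) = Suc (card D)" by (simp add: card_image)
    moreover have "card (a ` {..card D}) \<le> card D"
      using a_in by (intro card_mono[OF \<open>finite D\<close>]) auto
    ultimately show False by simp
  qed
  then have "\<exists>q. \<exists>p<q. a p = a q"
    unfolding inj_on_def by (metis linorder_neqE_nat)
  then obtain q where "\<exists>p<q. a p = a q" and least: "\<And>q'. q' < q \<Longrightarrow> \<not> (\<exists>p<q'. a p = a q')"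
    using exists_least_iff[of "\<lambda>q. \<exists>p<q. a p = a q"] by blast
  then obtain p where "p < q" "a p = a q" by blast
  moreover have "inj_on a {p..<q}"
  proof (rule inj_onI)
    fix k l assume "k \<in> {p..<q}" "l \<in> {p..<q}" "a k = a l"
    then show "k = l"
      using least[of k] least[of l] by (cases k l rule: linorder_cases) auto
  qed
  ultimately show ?thesis using that by blast
qed

lemma cycle_list_of_irreducible:
  assumes "finite D" and "j0 \<in> D" and maps: "\<And>j. j \<in> D \<Longrightarrow> \<sigma> j \<in> D"
    and irreducible: "\<And>J. J \<subseteq> D \<Longrightarrow> J \<noteq> {} \<Longrightarrow> \<sigma> ` J = J \<Longrightarrow> J = D"
  obtains vs where "distinct vs" and "set vs = D"
    and "\<And>k. k < length vs \<Longrightarrow> vs ! (Suc k mod length vs) = \<sigma> (vs ! k)"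
proof -
  define a where "a k = (\<sigma> ^^ k) j0" for k
  have a_in: "a k \<in> D" for k by (induction k) (simp_all add: a_def \<open>j0 \<in> D\<close> maps)
  have a_Suc: "a (Suc k) = \<sigma> (a k)" for k by (simp add: a_def)
  obtain p q where pq: "p < q" "a p = a q" and inj: "inj_on a {p..<q}"
    by (rule first_repetition[OF assms(1) a_in])
  have "\<sigma> ` a ` {p..<q} = a ` Suc ` {p..<q}"
    by (simp only: image_image a_Suc)
  also have "Suc ` {p..<q} = insert q {Suc p..<q}"
    using pq(1) by (auto simp: image_Suc_atLeastLessThan)
  also have "a ` insert q {Suc p..<q} = a ` insert p {Suc p..<q}"
    using pq(2) by simp
  also have "insert p {Suc p..<q} = {p..<q}"
    using pq(1) by auto
  finally have invariant: "\<sigma> ` a ` {p..<q} = a ` {p..<q}" .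
  have "a ` {p..<q} = D"
    using a_in pq(1) by (intro irreducible[OF _ _ invariant]) auto
  define vs where "vs = map a [p..<q]"
  have nth_vs: "vs ! k = a (p + k)" if "k < length vs" for k
    using that by (simp add: vs_def)
  show ?thesis
  proof
    show "distinct vs" using inj by (simp add: vs_def distinct_map)
    show "set vs = D" using \<open>a ` {p..<q} = D\<close> by (simp add: vs_def)
    fix k assume k: "k < length vs"
    show "vs ! (Suc k mod length vs) = \<sigma> (vs ! k)"
    proof (cases "Suc k < length vs")
      case True
      then show ?thesis using k by (simp add: nth_vs a_Suc)
    next
      case False
      then have "Suc k = length vs" and "p + Suc k = q" using k pq(1) by (simp_all add: vs_def)
      moreover have "vs \<noteq> []" using k by auto
      ultimately have "vs ! (Suc k mod length vs) = a p" using nth_vs[of 0] by simp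
      also have "a p = \<sigma> (a (p + k))" using pq(2) \<open>p + Suc k = q\<close> a_Suc by auto
      finally show ?thesis using nth_vs[OF k] by simp
    qed
  qed
qed

lemma inj_on_cycle_list:
  assumes "distinct vs" and cycle: "\<And>k. k < length vs \<Longrightarrow> vs ! (Suc k mod length vs) = \<sigma> (vs ! k)"
  shows "inj_on \<sigma> (set vs)"
proof (rule inj_onI)
  fix u v assume "u \<in> set vs" "v \<in> set vs" and eq: "\<sigma> u = \<sigma> v"
  then obtain k l where kl: "k < length vs" "l < length vs" "u = vs ! k" "v = vs ! l"
    by (auto simp: in_set_conv_nth)
  then show "u = v"
    using nth_Suc_mod_eq_iff[OF assms(1) kl(1,2)] cycle[OF kl(1)] cycle[OF kl(2)] eq by simp
qed

locale antipodal_fixed_points =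
  fixes D :: "'v set" and g :: "('v \<Rightarrow> bool) \<Rightarrow> ('v \<Rightarrow> bool)" and x z :: "'v \<Rightarrow> bool"
  assumes finite: "finite D" and nonempty: "D \<noteq> {}"
    and network: "is_network D g" and non_expansive: "non_expansive D g"
    and fixed_points: "fixed_points D g = {x, z}" and antipodal: "\<forall>v\<in>D. x v \<noteq> z v"
begin

lemma x_conf: "x \<in> conf D" and z_conf: "z \<in> conf D" and g_x: "g x = x" and g_z: "g z = z"
  using fixed_points by (auto simp: fixed_points_def)

lemma finite_disagree: "finite (disagree D u v)"
  using finite by (simp add: disagree_def)

lemma card_disagree_image: "u \<in> conf D \<Longrightarrow> card (disagree D (g u) x) = card (disagree D u x)"
proof -
  have sum: "card (disagree D u x) + card (disagree D u z) = card D" for u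
  proof -
    have "disagree D u z = D - disagree D u x" using antipodal by (auto simp: disagree_def)
    then show ?thesis
      using card_Diff_subset[OF finite_disagree disagree_subset] card_mono[OF finite disagree_subset]
      by simp
  qed
  assume "u \<in> conf D"
  then have "card (disagree D (g u) x) \<le> card (disagree D u x)"
    and "card (disagree D (g u) z) \<le> card (disagree D u z)"
    using non_expansiveD[OF non_expansive \<open>u \<in> conf D\<close>] x_conf z_conf g_x g_z by metis+
  then show ?thesis using sum[of u] sum[of "g u"] by linarith
qed

text \<open>Flipping x at j moves the image g x = x away from x at exactly one vertex, succ j.\<close>
definition succ :: "'v \<Rightarrow> 'v" where
  "succ j = (SOME k. disagree D (g (x(j := \<not> x j))) x = {k})"

lemma disagree_flip: "j \<in> D \<Longrightarrow> disagree D (g (x(j := \<not> x j))) x = {succ j}"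
proof -
  assume "j \<in> D"
  then have "disagree D (x(j := \<not> x j)) x = {j}" by (auto simp: disagree_def)
  then have "card (disagree D (g (x(j := \<not> x j))) x) = 1"
    using card_disagree_image[OF conf_fun_upd[OF x_conf \<open>j \<in> D\<close>]] by simp
  then have "\<exists>k. disagree D (g (x(j := \<not> x j))) x = {k}" by (simp add: card_1_singleton_iff)
  then show ?thesis unfolding succ_def by (rule someI_ex)
qed

lemma succ_in: "j \<in> D \<Longrightarrow> succ j \<in> D"
  using disagree_flip by (auto simp: disagree_def)

lemma succ_in_disagree:
  assumes u: "u \<in> conf D" and j: "j \<in> disagree D u x"
  shows "succ j \<in> disagree D (g u) x"
proof (rule ccontr)
  assume not_in: "succ j \<notin> disagree D (g u) x"
  have "j \<in> D" using j by (simp add: disagree_def)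
  let ?xj = "x(j := \<not> x j)"
  have xj_conf: "?xj \<in> conf D" using conf_fun_upd[OF x_conf \<open>j \<in> D\<close>] .
  have g_xj: "g ?xj v = (x v \<noteq> (v = succ j))" if "v \<in> D" for v
    using disagree_flip[OF \<open>j \<in> D\<close>] that unfolding disagree_def set_eq_iff by blast
  have "insert (succ j) (disagree D (g u) x) \<subseteq> disagree D (g u) (g ?xj)"
    using not_in succ_in[OF \<open>j \<in> D\<close>] g_xj by (auto simp: disagree_def)
  then have "Suc (card (disagree D (g u) x)) \<le> card (disagree D (g u) (g ?xj))"
    using not_in card_mono[OF finite_disagree] by (metis card_insert_disjoint finite_disagree)
  also have "\<dots> \<le> card (disagree D u ?xj)"
    using non_expansiveD[OF non_expansive u xj_conf] .
  also have "disagree D u ?xj = disagree D u x - {j}"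
    using j by (auto simp: disagree_def)
  finally show False
    using card_disagree_image[OF u] card_Diff_singleton[OF j] by simp
qed

lemma flip_at_invariant_fixed:
  assumes "J \<subseteq> D" and invariant: "succ ` J = J"
  shows "flip_at J x \<in> fixed_points D g"
proof -
  let ?y = "flip_at J x"
  have y_conf: "?y \<in> conf D" using x_conf \<open>J \<subseteq> D\<close> by (auto simp: conf_def flip_at_def)
  have disagree_y: "disagree D ?y x = J"
    using \<open>J \<subseteq> D\<close> by (auto simp: disagree_def flip_at_def)
  have J_sub: "J \<subseteq> disagree D (g ?y) x"
  proof
    fix v assume "v \<in> J"
    then obtain j where "j \<in> J" "v = succ j" using invariant by blast
    then show "v \<in> disagree D (g ?y) x" using succ_in_disagree[OF y_conf] disagree_y by simp
  qed
  have "card J = card (disagree D (g ?y) x)"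
    using card_disagree_image[OF y_conf] disagree_y by simp
  then have disagree_gy: "disagree D (g ?y) x = J"
    using card_subset_eq[OF finite_disagree J_sub] by simp
  have "g ?y = ?y"
  proof (rule conf_eqI)
    show "g ?y \<in> conf D" using network y_conf by (simp add: is_network_def)
    show "g ?y v = ?y v" if "v \<in> D" for v
      using disagree_gy disagree_y that by (auto simp: disagree_def set_eq_iff)
  qed (rule y_conf)
  then show ?thesis using y_conf by (simp add: fixed_points_def)
qed

lemma succ_invariant_subset_eq:
  assumes "J \<subseteq> D" and "J \<noteq> {}" and "succ ` J = J"
  shows "J = D"
proof -
  have "flip_at J x \<in> {x, z}"
    using flip_at_invariant_fixed[OF assms(1,3)] by (simp only: fixed_points)
  moreover obtain j where "j \<in> J" using \<open>J \<noteq> {}\<close> by blast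
  then have "flip_at J x j \<noteq> x j" by (simp add: flip_at_def)
  then have "flip_at J x \<noteq> x" by metis
  ultimately have "flip_at J x = z" by blast
  then have "D \<subseteq> J" using antipodal by (auto simp: flip_at_def)
  then show ?thesis using \<open>J \<subseteq> D\<close> by blast
qed

lemma succ_cycle:
  obtains vs where "distinct vs" and "set vs = D"
    and "\<And>k. k < length vs \<Longrightarrow> vs ! (Suc k mod length vs) = succ (vs ! k)"
proof -
  obtain j0 where "j0 \<in> D" using nonempty by blast
  then show ?thesis
    using cycle_list_of_irreducible[where \<sigma> = succ, OF finite _ succ_in succ_invariant_subset_eq] that
    by blast
qed

lemma inj_on_succ: "inj_on succ D"
  by (metis inj_on_cycle_list succ_cycle)

lemma disagree_image: "u \<in> conf D \<Longrightarrow> disagree D (g u) x = succ ` disagree D u x"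
proof -
  assume u: "u \<in> conf D"
  have "card (succ ` disagree D u x) = card (disagree D (g u) x)"
    using card_image[OF inj_on_subset[OF inj_on_succ disagree_subset]] card_disagree_image[OF u]
    by simp
  then show ?thesis
    using succ_in_disagree[OF u] finite_disagree by (metis card_subset_eq image_subsetI)
qed

lemma value_at_succ:
  assumes "u \<in> conf D" and "j \<in> D"
  shows "g u (succ j) = (u j = (x j = x (succ j)))"
proof -
  have "g u (succ j) \<noteq> x (succ j) \<longleftrightarrow> succ j \<in> disagree D (g u) x"
    using succ_in[OF \<open>j \<in> D\<close>] by (simp add: disagree_def)
  also have "\<dots> \<longleftrightarrow> j \<in> disagree D u x"
    using disagree_image[OF assms(1)] inj_on_image_mem_iff[OF inj_on_succ \<open>j \<in> D\<close> disagree_subset]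
    by simp
  also have "\<dots> \<longleftrightarrow> u j \<noteq> x j"
    using \<open>j \<in> D\<close> by (simp add: disagree_def)
  finally show ?thesis by argo
qed

lemma cyclic_form_changes:
  "\<exists>vs. cyclic_form D g vs (\<lambda>k. x (vs ! k) = x (vs ! (Suc k mod length vs)))"
proof -
  obtain vs where dvs: "distinct vs" and svs: "set vs = D"
    and cycle: "\<And>k. k < length vs \<Longrightarrow> vs ! (Suc k mod length vs) = succ (vs ! k)"
    using succ_cycle by metis
  have "g y (vs ! (Suc k mod length vs)) = (y (vs ! k) = (x (vs ! k) = x (vs ! (Suc k mod length vs))))"
    if "y \<in> conf D" and k: "k < length vs" for y k
    using value_at_succ[OF that(1), of "vs ! k"] cycle[OF k] nth_mem[OF k] svs by simp
  then have "cyclic_form D g vs (\<lambda>k. x (vs ! k) = x (vs ! (Suc k mod length vs)))"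
    using dvs svs by (simp add: cyclic_form_def)
  then show ?thesis by blast
qed

end

section \<open>Minimal subnetworks\<close>

definition fixed_points_differ_at ::
  "'v set \<Rightarrow> (('v \<Rightarrow> bool) \<Rightarrow> ('v \<Rightarrow> bool)) \<Rightarrow> 'v \<Rightarrow> bool" where
  "fixed_points_differ_at W h i \<longleftrightarrow> (\<exists>a\<in>fixed_points W h. \<exists>c\<in>fixed_points W h. a i \<noteq> c i)"

lemma antipodal_if_minimal:
  assumes minimal: "\<forall>E h. is_subnetwork V f E h \<and> i \<in> E \<and> fixed_points_differ_at E h i
      \<longrightarrow> \<not> card E < card D"
    and sub: "is_subnetwork V f D g" and "finite V"
    and a: "a \<in> fixed_points D g" and c: "c \<in> fixed_points D g" and "a i \<noteq> c i"
  shows "\<forall>v\<in>D. a v \<noteq> c v"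
proof (rule ccontr)
  assume "\<not> (\<forall>v\<in>D. a v \<noteq> c v)"
  define E where "E = disagree D a c"
  have a_conf: "a \<in> conf D" and c_conf: "c \<in> conf D"
    using a c by (simp_all add: fixed_points_def)
  then have "i \<in> E" using \<open>a i \<noteq> c i\<close> by (auto simp: E_def disagree_def conf_def)
  have "E \<subset> D" using \<open>\<not> (\<forall>v\<in>D. a v \<noteq> c v)\<close> by (auto simp: E_def disagree_def)
  then have "card E < card D"
    using is_subnetwork_finite[OF \<open>finite V\<close> sub] by (simp add: psubset_card_mono)
  have w_conf: "(\<lambda>v. v \<notin> E \<and> a v) \<in> conf (D - E)" using a_conf by (auto simp: conf_def)
  have c_outside: "\<forall>v. v \<notin> E \<longrightarrow> c v = a v"
    using a_conf c_conf by (auto simp: E_def disagree_def conf_def)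
  let ?h = "subnet g E (\<lambda>v. v \<notin> E \<and> a v)"
  have "is_subnetwork V f E ?h"
    using is_subnetwork_subnet[OF sub _ _ w_conf] \<open>E \<subset> D\<close> \<open>i \<in> E\<close> by auto
  moreover have "fixed_points_differ_at E ?h i"
  proof -
    have a_restr: "(\<lambda>v. v \<in> E \<and> a v) \<in> fixed_points E ?h"
      using restrict_fixed_point[OF a, of E a] by simp
    have c_restr: "(\<lambda>v. v \<in> E \<and> c v) \<in> fixed_points E ?h"
      using restrict_fixed_point[OF c c_outside] .
    show ?thesis
      unfolding fixed_points_differ_at_def using \<open>i \<in> E\<close> \<open>a i \<noteq> c i\<close>
      by (intro bexI[OF _ a_restr] bexI[OF _ c_restr]) simp
  qed
  ultimately show False using minimal \<open>i \<in> E\<close> \<open>card E < card D\<close> by blast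
qed

lemma fixed_points_eq_if_antipodal:
  assumes antipodal: "\<And>u u'. u \<in> fixed_points W g \<Longrightarrow> u' \<in> fixed_points W g \<Longrightarrow> u i \<noteq> u' i
      \<Longrightarrow> \<forall>v\<in>W. u v \<noteq> u' v"
    and a: "a \<in> fixed_points W g" and c: "c \<in> fixed_points W g" and "a i \<noteq> c i"
  shows "fixed_points W g = {a, c}"
proof
  show "fixed_points W g \<subseteq> {a, c}"
  proof
    fix u assume u: "u \<in> fixed_points W g"
    have conf: "u \<in> conf W" "a \<in> conf W" "c \<in> conf W"
      using u a c by (simp_all add: fixed_points_def)
    show "u \<in> {a, c}"
    proof (cases "u i = a i")
      case True
      then have "u = a"
        using conf_antipodal_unique[OF conf(1,2)] antipodal[OF c u] antipodal[OF c a] \<open>a i \<noteq> c i\<close>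
        by simp
      then show ?thesis by simp
    next
      case False
      then have "u = c"
        using conf_antipodal_unique[OF conf(1,3)] antipodal[OF a u] antipodal[OF a c] \<open>a i \<noteq> c i\<close>
        by simp
      then show ?thesis by simp
    qed
  qed
qed (use a c in simp)

lemma minimal_differing_fixed_points_cyclic_form:
  assumes "finite V" and "non_expansive V f"
    and minimal: "\<forall>E h. is_subnetwork V f E h \<and> i \<in> E \<and> fixed_points_differ_at E h i
      \<longrightarrow> \<not> card E < card D"
    and sub: "is_subnetwork V f D g" and differ: "fixed_points_differ_at D g i"
  shows "\<exists>vs s. cyclic_form D g vs s \<and> even (card {k. k < length vs \<and> \<not> s k})"
proof -
  obtain a c where a: "a \<in> fixed_points D g" and c: "c \<in> fixed_points D g" and "a i \<noteq> c i"
    using differ by (auto simp: fixed_points_differ_at_def)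
  note antipodal = antipodal_if_minimal[OF minimal sub \<open>finite V\<close>]
  have "D \<noteq> {}" using sub by (simp add: is_subnetwork_def)
  then have "antipodal_fixed_points D g a c"
    unfolding antipodal_fixed_points_def
    using fixed_points_eq_if_antipodal[OF antipodal a c \<open>a i \<noteq> c i\<close>] antipodal[OF a c \<open>a i \<noteq> c i\<close>]
      is_subnetwork_finite[OF assms(1) sub] is_subnetwork_is_network[OF sub]
      non_expansive_subnetwork[OF assms(1,2) sub]
    by (intro conjI)
  then interpret antipodal_fixed_points D g a c .
  obtain vs where "cyclic_form D g vs (\<lambda>k. a (vs ! k) = a (vs ! (Suc k mod length vs)))"
    using cyclic_form_changes by blast
  moreover have "even (card {k. k < length vs \<and> \<not> (a (vs ! k) = a (vs ! (Suc k mod length vs)))})"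
    using even_card_cyclic_changes[of "length vs" "\<lambda>k. a (vs ! k)"] by simp
  ultimately show ?thesis by blast
qed

lemma differing_fixed_points_imp_even_cyclic_subnetwork:
  assumes "finite V" and "non_expansive V f"
    and "is_subnetwork V f I h" and "i \<in> I" and "fixed_points_differ_at I h i"
  shows "\<exists>D g vs s. is_subnetwork V f D g \<and> i \<in> D \<and> cyclic_form D g vs s
    \<and> even (card {k. k < length vs \<and> \<not> s k})"
proof -
  obtain D g where sub_D: "is_subnetwork V f D g" and "i \<in> D"
    and differ: "fixed_points_differ_at D g i"
    and minimal_D: "\<forall>E h. is_subnetwork V f E h \<and> i \<in> E \<and> fixed_points_differ_at E h i
      \<longrightarrow> \<not> card E < card D"
    using ex_card_minimal[of "\<lambda>D g. is_subnetwork V f D g \<and> i \<in> D \<and> fixed_points_differ_at D g i"]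
      assms(3-5) by blast
  then show ?thesis
    using minimal_differing_fixed_points_cyclic_form[OF assms(1,2) minimal_D sub_D differ] by blast
qed

lemma two_fixed_points_imp_positive_circular:
  assumes "finite V" and "non_expansive V f"
    and sub: "is_subnetwork V f I h" and two: "\<not> card (fixed_points I h) \<le> 1"
  shows "\<exists>I h. is_subnetwork V f I h \<and> positive_circular I h"
proof -
  obtain a c where a: "a \<in> fixed_points I h" and c: "c \<in> fixed_points I h" and "a \<noteq> c"
    using two card_le_Suc0_iff_eq[OF finite_fixed_points[OF is_subnetwork_finite[OF assms(1) sub]]]
    by auto
  then obtain i where "i \<in> I" "a i \<noteq> c i"
    using conf_eqI[of a I c] by (auto simp: fixed_points_def)
  then have "fixed_points_differ_at I h i"
    using a c by (auto simp: fixed_points_differ_at_def)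
  then obtain D g vs s where sub_D: "is_subnetwork V f D g" and "cyclic_form D g vs s"
    and "even (card {k. k < length vs \<and> \<not> s k})"
    using differing_fixed_points_imp_even_cyclic_subnetwork[OF assms(1,2) sub \<open>i \<in> I\<close>] by blast
  then have "positive_circular D g"
    using positive_circular_iff_cyclic_form[OF is_subnetwork_finite[OF assms(1) sub_D]] by blast
  then show ?thesis using sub_D by blast
qed

text \<open>Freezing i, minimality gives a fixed point on the remaining vertices; since it is not a fixed
  point of h itself, h flips it exactly at i.\<close>
lemma flipped_fixed_point_if_minimal:
  assumes "finite V" and sub: "is_subnetwork V f I h" and "i \<in> I" and no_fp: "fixed_points I h = {}"
    and minimal: "\<And>E h'. is_subnetwork V f E h' \<Longrightarrow> card E < card I \<Longrightarrow> fixed_points E h' \<noteq> {}"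
  obtains u where "u \<in> fixed_points I (flip_at {i} \<circ> h)" and "u i = b"
proof -
  define w where "w = (\<lambda>v. v = i \<and> b)"
  have "\<exists>u\<in>conf I. u i = b \<and> (\<forall>j\<in>I - {i}. h u j = u j)"
  proof (cases "I - {i} = {}")
    case True
    have "w \<in> conf I" using \<open>i \<in> I\<close> by (auto simp: w_def conf_def)
    then show ?thesis using True by (intro bexI[of _ w]) (auto simp: w_def)
  next
    case False
    have w_conf: "w \<in> conf (I - (I - {i}))" using \<open>i \<in> I\<close> by (auto simp: conf_def w_def)
    have "is_subnetwork V f (I - {i}) (subnet h (I - {i}) w)"
      using is_subnetwork_subnet[OF sub _ False w_conf] by blast
    moreover have "card (I - {i}) < card I"
      using card_Diff1_less[OF is_subnetwork_finite[OF assms(1) sub] \<open>i \<in> I\<close>] .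
    ultimately obtain u' where "u' \<in> conf (I - {i})" and fixed: "subnet h (I - {i}) w u' = u'"
      using minimal by (auto simp: fixed_points_def)
    moreover have "h (glue (I - {i}) u' w) j = u' j" if "j \<in> I - {i}" for j
      using fun_cong[OF fixed, of j] that by (simp add: subnet_glue)
    ultimately show ?thesis using \<open>i \<in> I\<close>
      by (intro bexI[of _ "glue (I - {i}) u' w"]) (auto simp: glue_def w_def conf_def)
  qed
  then obtain u where u: "u \<in> conf I" "u i = b" and agree: "\<forall>j\<in>I - {i}. h u j = u j" by blast
  have "h u \<in> conf I" using is_subnetwork_is_network[OF sub] u(1) by (simp add: is_network_def)
  moreover have "h u \<noteq> u" using no_fp u(1) by (auto simp: fixed_points_def)
  ultimately have "h u = flip_at {i} u"
    using eq_flip_at_if_agree_elsewhere[OF u(1) _ \<open>i \<in> I\<close> agree] by blast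
  then show ?thesis using that u by (simp add: fixed_points_flip_at)
qed

lemma flipped_fixed_points_differ_if_minimal:
  assumes "finite V" and "is_subnetwork V f I h" and "i \<in> I" and "fixed_points I h = {}"
    and "\<And>E h'. is_subnetwork V f E h' \<Longrightarrow> card E < card I \<Longrightarrow> fixed_points E h' \<noteq> {}"
  shows "fixed_points_differ_at I (flip_at {i} \<circ> h) i"
proof -
  obtain u1 where u1: "u1 \<in> fixed_points I (flip_at {i} \<circ> h)" "u1 i = True"
    by (rule flipped_fixed_point_if_minimal[OF assms])
  obtain u0 where u0: "u0 \<in> fixed_points I (flip_at {i} \<circ> h)" "u0 i = False"
    by (rule flipped_fixed_point_if_minimal[OF assms])
  show ?thesis
    unfolding fixed_points_differ_at_def using u1(2) u0(2)
    by (intro bexI[OF _ u1(1)] bexI[OF _ u0(1)]) simp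
qed

lemma negative_circular_flip_at:
  assumes "finite D" and cf: "cyclic_form D g vs s" and even: "even (card {k. k < length vs \<and> \<not> s k})"
    and "i \<in> D"
  shows "negative_circular D (flip_at {i} \<circ> g)"
proof -
  obtain s' where "cyclic_form D (flip_at {i} \<circ> g) vs s'"
    and "even (card {k. k < length vs \<and> \<not> s' k}) \<longleftrightarrow> odd (card {k. k < length vs \<and> \<not> s k})"
    by (rule cyclic_form_flip_at[OF cf \<open>i \<in> D\<close>])
  then show ?thesis
    using even negative_circular_iff_cyclic_form[OF assms(1)] by auto
qed

lemma no_fixed_point_imp_negative_circular:
  assumes "finite V" and "non_expansive V f"
    and "is_subnetwork V f I h" and "fixed_points I h = {}"
  shows "\<exists>I h. is_subnetwork V f I h \<and> negative_circular I h"
proof -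
  obtain I h where sub: "is_subnetwork V f I h" and no_fp: "fixed_points I h = {}"
    and minimal: "\<forall>E h'. is_subnetwork V f E h' \<and> fixed_points E h' = {} \<longrightarrow> \<not> card E < card I"
    using ex_card_minimal[of "\<lambda>I h. is_subnetwork V f I h \<and> fixed_points I h = {}"] assms(3,4)
    by blast
  obtain i where "i \<in> I" using sub by (auto simp: is_subnetwork_def)
  have smaller: "fixed_points E h' \<noteq> {}" if "is_subnetwork V f E h'" "card E < card I" for E h'
    using minimal that by blast
  have "is_subnetwork V (flip_at {i} \<circ> f) I (flip_at {i} \<circ> h)"
    using is_subnetwork_flip_at[OF sub] \<open>i \<in> I\<close> by simp
  then obtain D g vs s where sub_D: "is_subnetwork V (flip_at {i} \<circ> f) D g" and "i \<in> D"
    and cf: "cyclic_form D g vs s" and even: "even (card {k. k < length vs \<and> \<not> s k})"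
    using differing_fixed_points_imp_even_cyclic_subnetwork[OF assms(1) non_expansive_flip_at[OF assms(2)]
        _ \<open>i \<in> I\<close> flipped_fixed_points_differ_if_minimal[OF assms(1) sub \<open>i \<in> I\<close> no_fp smaller]]
    by blast
  have "is_subnetwork V f D (flip_at {i} \<circ> g)"
    using is_subnetwork_flip_at[OF sub_D, of "{i}"] \<open>i \<in> D\<close> by simp
  moreover have "negative_circular D (flip_at {i} \<circ> g)"
    using negative_circular_flip_at[OF is_subnetwork_finite[OF assms(1) sub_D] cf even \<open>i \<in> D\<close>] .
  ultimately show ?thesis by blast
qed

lemma positive_circular_imp_two_fixed_points:
  assumes "finite V" and sub: "is_subnetwork V f I h" and "positive_circular I h"
  shows "\<not> card (fixed_points I h) \<le> 1"
proof -
  have fin: "finite I" using is_subnetwork_finite[OF assms(1) sub] .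
  then obtain vs s where cf: "cyclic_form I h vs s" and even: "even (card {k. k < length vs \<and> \<not> s k})"
    using assms(3) positive_circular_iff_cyclic_form by blast
  have "vs \<noteq> []" using cf sub by (auto simp: cyclic_form_def is_subnetwork_def)
  then obtain a c where "a \<in> fixed_points I h" "c \<in> fixed_points I h" "a \<noteq> c"
    using cyclic_form_even_imp_two_fixed_points[OF is_subnetwork_is_network[OF sub] cf _ even] by blast
  then show ?thesis using card_le_Suc0_iff_eq[OF finite_fixed_points[OF fin]] by auto
qed

lemma negative_circular_imp_no_fixed_point:
  assumes "finite V" and "is_subnetwork V f I h" and "negative_circular I h"
  shows "fixed_points I h = {}"
  using assms negative_circular_iff_cyclic_form[OF is_subnetwork_finite[OF assms(1,2)]]
    cyclic_form_odd_imp_no_fixed_point by blast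

theorem corollary7:
  fixes V :: "'v set" and f :: "('v \<Rightarrow> bool) \<Rightarrow> ('v \<Rightarrow> bool)"
  assumes "finite V" and "V \<noteq> {}"
    and "is_network V f"
    and "non_expansive V f"
  shows "((\<forall>I h. is_subnetwork V f I h \<longrightarrow> card (fixed_points I h) \<le> 1) \<longleftrightarrow>
            \<not> (\<exists>I h. is_subnetwork V f I h \<and> positive_circular I h))
       \<and> ((\<forall>I h. is_subnetwork V f I h \<longrightarrow> fixed_points I h \<noteq> {}) \<longleftrightarrow>
            \<not> (\<exists>I h. is_subnetwork V f I h \<and> negative_circular I h))"
  using positive_circular_imp_two_fixed_points[OF assms(1)]
    two_fixed_points_imp_positive_circular[OF assms(1,4)]
    negative_circular_imp_no_fixed_point[OF assms(1)]
    no_fixed_point_imp_negative_circular[OF assms(1,4)]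
  by blast

end
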